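(* Let $\mathfrak g$ be a barrelled locally convex Lie algebra and let $(\pi,V)$ be a continuous unitary representation of $\mathfrak g$. Then the map $\mathfrak g\times V\to V$, $(\xi,\psi)\mapsto\pi(\xi)\psi$, is sequentially continuous when $V$ carries the weak topology, and also when $V$ carries the strong topology.
   Context: Barrelled: every closed, convex, circled, absorbing subset is a $0$-neighbourhood. A unitary representation $(\pi,V)$ of $\mathfrak g$: $V$ complex pre-Hilbert space (completion $\mathcal H_V$), $\pi\colon\mathfrak g\to\mathrm{End}(V)$ a Lie algebra homomorphism with skew-symmetric values. $\pi_n(\xi_n,\dots,\xi_1)=\pi(\xi_n)\cdots\pi(\xi_1)$, $\pi_0(\lambda)=\lambda\mathbf 1$ on $\mathfrak g^0=\mathbb R$. Continuous: for all $n\ge0$, $\psi\in V$, $\boldsymbol\xi\mapsto\pi_n(\boldsymbol\xi)\psi$ is continuous $\mathfrak g^n\to\mathcal H_V$ for the norm. Weak topology on $V$: seminorms $p_{\boldsymbol\xi}(\psi)=\|\pi_n(\boldsymbol\xi)\psi\|$, $\boldsymbol\xi\in\mathfrak g^n$, $n\ge0$. Strong topology: seminorms $p_B(\psi)=\sup_{\boldsymbol\xi\in B}\|\pi_n(\boldsymbol\xi)\psi\|$, $B\subseteq\mathfrak g^n$ bounded, $n\ge0$. *)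

theory Defs
  imports "HOL-Analysis.Analysis"
begin

definition locally_convex_tvs :: "'g::{real_vector,topological_space} itself \<Rightarrow> bool" where
  "locally_convex_tvs _ \<longleftrightarrow>
     continuous_on UNIV (\<lambda>(x::'g, y). x + y) \<and>
     continuous_on UNIV (\<lambda>(c::real, x::'g). c *\<^sub>R x) \<and>
     (\<forall>U::'g set. open U \<and> 0 \<in> U \<longrightarrow> (\<exists>W. open W \<and> 0 \<in> W \<and> convex W \<and> W \<subseteq> U))"

definition circled :: "'g::real_vector set \<Rightarrow> bool" where
  "circled B \<longleftrightarrow> (\<forall>c::real. \<bar>c\<bar> \<le> 1 \<longrightarrow> (\<lambda>x. c *\<^sub>R x) ` B \<subseteq> B)"

definition absorbing :: "'g::real_vector set \<Rightarrow> bool" where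
  "absorbing B \<longleftrightarrow> (\<forall>x. \<exists>t>0. \<forall>c::real. \<bar>c\<bar> \<le> t \<longrightarrow> c *\<^sub>R x \<in> B)"

definition barrelled :: "'g::{real_vector,topological_space} itself \<Rightarrow> bool" where
  "barrelled _ \<longleftrightarrow>
     (\<forall>B::'g set. closed B \<and> convex B \<and> circled B \<and> absorbing B \<longrightarrow>
        (\<exists>U. open U \<and> (0::'g) \<in> U \<and> U \<subseteq> B))"

definition lc_lie_algebra ::
  "('g::{real_vector,topological_space} \<Rightarrow> 'g \<Rightarrow> 'g) \<Rightarrow> bool" where
  "lc_lie_algebra br \<longleftrightarrow>
     locally_convex_tvs TYPE('g) \<and>
     continuous_on UNIV (\<lambda>(x, y). br x y) \<and>
     (\<forall>x y z. br (x + y) z = br x z + br y z) \<and>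
     (\<forall>(c::real) x y. br (c *\<^sub>R x) y = c *\<^sub>R br x y) \<and>
     (\<forall>x y z. br x (y + z) = br x y + br x z) \<and>
     (\<forall>(c::real) x y. br x (c *\<^sub>R y) = c *\<^sub>R br x y) \<and>
     (\<forall>x. br x x = 0) \<and>
     (\<forall>x y z. br x (br y z) + br y (br z x) + br z (br x y) = 0)"

text \<open>An element (xi_n, ..., xi_1) of g^n is a function f on {..<n} with f i = xi_(i+1),
i.e. an element of PiE {..<n} (\<lambda>_. UNIV), carrying the product topology.\<close>

abbreviation gpow_top :: "nat \<Rightarrow> (nat \<Rightarrow> 'g::topological_space) topology" where
  "gpow_top n \<equiv> product_topology (\<lambda>_. euclidean) {..<n}"

text \<open>Boundedness in the topological vector space g^n: B is absorbed by every
0-neighbourhood; it suffices to test the basic (box) neighbourhoods U^n.\<close>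
definition bounded_gpow :: "nat \<Rightarrow> (nat \<Rightarrow> 'g::{real_vector,topological_space}) set \<Rightarrow> bool" where
  "bounded_gpow n B \<longleftrightarrow>
     B \<subseteq> PiE {..<n} (\<lambda>_. UNIV) \<and>
     (\<forall>U::'g set. open U \<and> 0 \<in> U \<longrightarrow>
        (\<exists>t>0. \<forall>s::real. s > t \<longrightarrow> (\<forall>f\<in>B. \<forall>i<n. f i \<in> (\<lambda>x. s *\<^sub>R x) ` U)))"

text \<open>V is a type 'v with complex scalar multiplication sc and inner product ip
(linear in the second, conjugate-linear in the first argument).\<close>
definition complex_pre_hilbert ::
  "(complex \<Rightarrow> 'v::ab_group_add \<Rightarrow> 'v) \<Rightarrow> ('v \<Rightarrow> 'v \<Rightarrow> complex) \<Rightarrow> bool" where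
  "complex_pre_hilbert sc ip \<longleftrightarrow>
     Vector_Spaces.vector_space sc \<and>
     (\<forall>x y. ip x y = cnj (ip y x)) \<and>
     (\<forall>x y z. ip x (y + z) = ip x y + ip x z) \<and>
     (\<forall>c x y. ip x (sc c y) = c * ip x y) \<and>
     (\<forall>x. 0 \<le> Re (ip x x)) \<and>
     (\<forall>x. ip x x = 0 \<longrightarrow> x = 0)"

definition vnorm :: "('v \<Rightarrow> 'v \<Rightarrow> complex) \<Rightarrow> 'v \<Rightarrow> real" where
  "vnorm ip x = sqrt (Re (ip x x))"

definition seminorm_topology :: "('v::ab_group_add \<Rightarrow> real) set \<Rightarrow> 'v topology" where
  "seminorm_topology P = topology (\<lambda>U. \<forall>x\<in>U. \<exists>F \<epsilon>. finite F \<and> F \<subseteq> P \<and> \<epsilon> > 0 \<and>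
        {y. \<forall>p\<in>F. p (y - x) < \<epsilon>} \<subseteq> U)"

text \<open>pi_n (xi_n, ..., xi_1) = rho(xi_n) ... rho(xi_1), with f i = xi_(i+1).\<close>
fun pin :: "('g \<Rightarrow> 'v \<Rightarrow> 'v) \<Rightarrow> nat \<Rightarrow> (nat \<Rightarrow> 'g) \<Rightarrow> 'v \<Rightarrow> 'v" where
  "pin rho 0 f = id"
| "pin rho (Suc n) f = rho (f n) \<circ> pin rho n f"

definition unitary_rep ::
  "('g::real_vector \<Rightarrow> 'g \<Rightarrow> 'g) \<Rightarrow> (complex \<Rightarrow> 'v::ab_group_add \<Rightarrow> 'v) \<Rightarrow>
   ('v \<Rightarrow> 'v \<Rightarrow> complex) \<Rightarrow> ('g \<Rightarrow> 'v \<Rightarrow> 'v) \<Rightarrow> bool" where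
  "unitary_rep br sc ip rho \<longleftrightarrow>
     complex_pre_hilbert sc ip \<and>
     \<comment> \<open>each rho(xi) is a (complex-linear) endomorphism of V\<close>
     (\<forall>x u v. rho x (u + v) = rho x u + rho x v) \<and>
     (\<forall>x c v. rho x (sc c v) = sc c (rho x v)) \<and>
     \<comment> \<open>rho is real-linear\<close>
     (\<forall>x y v. rho (x + y) v = rho x v + rho y v) \<and>
     (\<forall>(a::real) x v. rho (a *\<^sub>R x) v = sc (complex_of_real a) (rho x v)) \<and>
     \<comment> \<open>Lie algebra homomorphism\<close>
     (\<forall>x y v. rho (br x y) v = rho x (rho y v) - rho y (rho x v)) \<and>
     \<comment> \<open>skew-symmetric values\<close>
     (\<forall>x u v. ip (rho x u) v = - ip u (rho x v))"

text \<open>Continuity: for all n and psi, xi \<mapsto> pi_n(xi) psi is continuous from g^n into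
V with the norm topology (equivalently into the completion H_V).\<close>
definition continuous_rep ::
  "('v \<Rightarrow> 'v \<Rightarrow> complex) \<Rightarrow> ('g::topological_space \<Rightarrow> 'v::ab_group_add \<Rightarrow> 'v) \<Rightarrow> bool" where
  "continuous_rep ip rho \<longleftrightarrow>
     (\<forall>n \<psi>. continuous_map (gpow_top n) (seminorm_topology {vnorm ip}) (\<lambda>f. pin rho n f \<psi>))"

definition weak_top :: "('v \<Rightarrow> 'v \<Rightarrow> complex) \<Rightarrow> ('g \<Rightarrow> 'v::ab_group_add \<Rightarrow> 'v) \<Rightarrow> 'v topology" where
  "weak_top ip rho = seminorm_topology
     {(\<lambda>\<psi>. vnorm ip (pin rho n f \<psi>)) | n f. f \<in> PiE {..<n} (\<lambda>_. UNIV)}"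

text \<open>Strong topology: seminorms psi \<mapsto> sup over xi in B of ||pi_n(xi) psi||, B bounded
(empty B gives the zero seminorm and is omitted).\<close>
definition strong_top ::
  "('v \<Rightarrow> 'v \<Rightarrow> complex) \<Rightarrow> ('g::{real_vector,topological_space} \<Rightarrow> 'v::ab_group_add \<Rightarrow> 'v) \<Rightarrow> 'v topology" where
  "strong_top ip rho = seminorm_topology
     {(\<lambda>\<psi>. SUP f\<in>B. vnorm ip (pin rho n f \<psi>)) | n B. B \<noteq> {} \<and> bounded_gpow n B}"

definition seq_cont_action :: "'v topology \<Rightarrow> ('g::topological_space \<Rightarrow> 'v \<Rightarrow> 'v) \<Rightarrow> bool" where
  "seq_cont_action T rho \<longleftrightarrow>
     (\<forall>(\<xi>::nat \<Rightarrow> 'g) \<psi> \<xi>0 \<psi>0.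
        limitin (prod_topology euclidean T) (\<lambda>k. (\<xi> k, \<psi> k)) (\<xi>0, \<psi>0) sequentially \<longrightarrow>
        limitin T (\<lambda>k. rho (\<xi> k) (\<psi> k)) (rho \<xi>0 \<psi>0) sequentially)"

end

theory Submission
  imports Defs
begin

text \<open>Given \<open>\<xi>\<^sub>k \<rightarrow> \<xi>\<close> and \<open>\<psi>\<^sub>k \<rightarrow> \<psi>\<close>, split
  \<open>\<rho>(\<xi>\<^sub>k)\<psi>\<^sub>k - \<rho>(\<xi>)\<psi> = \<rho>(\<xi>\<^sub>k - \<xi>)(\<psi>\<^sub>k - \<psi>) + \<rho>(\<xi>)(\<psi>\<^sub>k - \<psi>) + \<rho>(\<xi>\<^sub>k - \<xi>)\<psi>\<close>
  and estimate each term in a defining seminorm \<open>p\<^sub>B \<psi> = sup {\<parallel>\<pi>\<^sub>n(f)\<psi>\<parallel> | f \<in> B}\<close>.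
  The middle term is \<open>p\<^sub>B\<^sub>'(\<psi>\<^sub>k - \<psi>)\<close> for the bounded set \<open>B' = B \<times> {\<xi>}\<close>.
  Continuity of \<open>\<pi>\<^sub>n\<^sub>+\<^sub>1\<close> at 0 together with multilinearity makes \<open>z \<mapsto> p\<^sub>B(\<rho>(z)\<phi>)\<close> a
  continuous seminorm on the Lie algebra, which disposes of the last term. For the first term,
  the continuous seminorms \<open>q\<^sub>k z = p\<^sub>B(\<rho>(z)(\<psi>\<^sub>k - \<psi>))\<close> tend to 0 pointwise, being the
  seminorms of \<open>B \<times> {z}\<close> evaluated at \<open>\<psi>\<^sub>k - \<psi>\<close>; so barrelledness bounds them by 1 on a common
  0-neighbourhood, whence \<open>q\<^sub>k(\<xi>\<^sub>k - \<xi>) \<rightarrow> 0\<close>. This covers both topologies: they are generated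
  by the \<open>p\<^sub>B\<close> for \<open>B\<close> ranging over singletons, resp. nonempty bounded sets, and both classes
  are closed under \<open>B \<mapsto> B \<times> {\<xi>}\<close>.\<close>

section \<open>Topologies defined by seminorms\<close>

lemma openin_seminorm_topology:
  "openin (seminorm_topology P) U \<longleftrightarrow>
     (\<forall>x\<in>U. \<exists>F \<epsilon>. finite F \<and> F \<subseteq> P \<and> \<epsilon> > 0 \<and> {y. \<forall>p\<in>F. p (y - x) < \<epsilon>} \<subseteq> U)"
proof -
  have "istopology (\<lambda>U. \<forall>x\<in>U. \<exists>F \<epsilon>. finite F \<and> F \<subseteq> P \<and> \<epsilon> > 0 \<and>
          {y. \<forall>p\<in>F. p (y - x) < \<epsilon>} \<subseteq> U)"
    unfolding istopology_def
  proof (intro conjI allI impI)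
    fix S T
    assume S: "\<forall>x\<in>S. \<exists>F \<epsilon>. finite F \<and> F \<subseteq> P \<and> \<epsilon> > 0 \<and> {y. \<forall>p\<in>F. p (y - x) < \<epsilon>} \<subseteq> S"
      and T: "\<forall>x\<in>T. \<exists>F \<epsilon>. finite F \<and> F \<subseteq> P \<and> \<epsilon> > 0 \<and> {y. \<forall>p\<in>F. p (y - x) < \<epsilon>} \<subseteq> T"
    show "\<forall>x\<in>S \<inter> T. \<exists>F \<epsilon>. finite F \<and> F \<subseteq> P \<and> \<epsilon> > 0 \<and> {y. \<forall>p\<in>F. p (y - x) < \<epsilon>} \<subseteq> S \<inter> T"
    proof
      fix x assume x: "x \<in> S \<inter> T"
      obtain F1 e1 where F1: "finite F1" "F1 \<subseteq> P" "e1 > 0" "{y. \<forall>p\<in>F1. p (y - x) < e1} \<subseteq> S"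
        using S x by (meson IntD1)
      obtain F2 e2 where F2: "finite F2" "F2 \<subseteq> P" "e2 > 0" "{y. \<forall>p\<in>F2. p (y - x) < e2} \<subseteq> T"
        using T x by (meson IntD2)
      have "{y. \<forall>p\<in>F1 \<union> F2. p (y - x) < min e1 e2} \<subseteq> S \<inter> T"
        using F1(4) F2(4) by (auto simp: subset_iff)
      with F1(1-3) F2(1-3) show "\<exists>F \<epsilon>. finite F \<and> F \<subseteq> P \<and> \<epsilon> > 0 \<and> {y. \<forall>p\<in>F. p (y - x) < \<epsilon>} \<subseteq> S \<inter> T"
        by (intro exI[of _ "F1 \<union> F2"] exI[of _ "min e1 e2"]) auto
    qed
  qed (meson Union_iff subset_iff)
  then show ?thesis
    unfolding seminorm_topology_def by simp
qed

lemma topspace_seminorm_topology [simp]: "topspace (seminorm_topology P) = UNIV"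
proof -
  have "openin (seminorm_topology P) UNIV"
    unfolding openin_seminorm_topology by (intro ballI exI[of _ "{}"] exI[of _ 1]) auto
  then show ?thesis
    using openin_subset by blast
qed

lemma openin_seminorm_ball:
  assumes "p \<in> P" and subadd: "\<And>a b. p (a + b) \<le> p a + p b"
  shows "openin (seminorm_topology P) {y. p (y - x) < e}"
  unfolding openin_seminorm_topology
proof
  fix z assume z: "z \<in> {y. p (y - x) < e}"
  have "{y. \<forall>q\<in>{p}. q (y - z) < e - p (z - x)} \<subseteq> {y. p (y - x) < e}"
  proof
    fix y assume "y \<in> {y. \<forall>q\<in>{p}. q (y - z) < e - p (z - x)}"
    moreover have "p (y - x) \<le> p (y - z) + p (z - x)"
      using subadd[of "y - z" "z - x"] by simp
    ultimately show "y \<in> {y. p (y - x) < e}" by simp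
  qed
  with assms(1) z show "\<exists>F \<epsilon>. finite F \<and> F \<subseteq> P \<and> \<epsilon> > 0 \<and> {y. \<forall>p\<in>F. p (y - z) < \<epsilon>} \<subseteq> {y. p (y - x) < e}"
    by (intro exI[of _ "{p}"] exI[of _ "e - p (z - x)"]) auto
qed

lemma limitin_seminorm_topology:
  assumes subadd: "\<And>p a b. p \<in> P \<Longrightarrow> p (a + b) \<le> p a + p b"
    and nonneg: "\<And>p a. p \<in> P \<Longrightarrow> 0 \<le> p a"
    and zero: "\<And>p. p \<in> P \<Longrightarrow> p 0 = 0"
  shows "limitin (seminorm_topology P) x l F \<longleftrightarrow> (\<forall>p\<in>P. ((\<lambda>k. p (x k - l)) \<longlongrightarrow> 0) F)"
proof
  assume lim: "limitin (seminorm_topology P) x l F"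
  show "\<forall>p\<in>P. ((\<lambda>k. p (x k - l)) \<longlongrightarrow> 0) F"
  proof (intro ballI tendstoI)
    fix p and e :: real assume "p \<in> P" "e > 0"
    moreover have "openin (seminorm_topology P) {y. p (y - l) < e}"
      using \<open>p \<in> P\<close> by (rule openin_seminorm_ball) (rule subadd[OF \<open>p \<in> P\<close>])
    ultimately have "eventually (\<lambda>k. x k \<in> {y. p (y - l) < e}) F"
      using lim zero[OF \<open>p \<in> P\<close>] \<open>e > 0\<close> unfolding limitin_def by auto
    then show "eventually (\<lambda>k. dist (p (x k - l)) 0 < e) F"
      by eventually_elim (use \<open>p \<in> P\<close> nonneg in simp)
  qed
next
  assume lim: "\<forall>p\<in>P. ((\<lambda>k. p (x k - l)) \<longlongrightarrow> 0) F"
  show "limitin (seminorm_topology P) x l F"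
    unfolding limitin_def
  proof (intro conjI allI impI)
    fix U assume "openin (seminorm_topology P) U \<and> l \<in> U"
    then obtain G e where G: "finite G" "G \<subseteq> P" "e > 0" "{y. \<forall>p\<in>G. p (y - l) < e} \<subseteq> U"
      unfolding openin_seminorm_topology by blast
    have "eventually (\<lambda>k. p (x k - l) < e) F" if "p \<in> G" for p
      using order_tendstoD(2)[OF lim[rule_format, of p] \<open>e > 0\<close>] G(2) that by blast
    then have "eventually (\<lambda>k. \<forall>p\<in>G. p (x k - l) < e) F"
      using G(1) by (simp add: eventually_ball_finite)
    then show "eventually (\<lambda>k. x k \<in> U) F"
      by eventually_elim (use G(4) in blast)
  qed simp
qed

section \<open>Complex pre-Hilbert spaces\<close>

lemma quadratic_form_discriminant:
  fixes a b c :: real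
  assumes nonneg: "\<And>t. 0 \<le> a + 2 * t * b + t\<^sup>2 * c" and "0 \<le> c"
  shows "b\<^sup>2 \<le> a * c"
proof (cases "c = 0")
  case True
  have "b = 0"
  proof (rule ccontr)
    assume "b \<noteq> 0"
    then have "a + 2 * (- (a + 1) / (2 * b)) * b + (- (a + 1) / (2 * b))\<^sup>2 * c = - 1"
      using True by (simp add: field_simps)
    then show False
      using nonneg[of "- (a + 1) / (2 * b)"] by linarith
  qed
  with True show ?thesis by simp
next
  case False
  with \<open>0 \<le> c\<close> have "c > 0" by simp
  have "a + 2 * (- b / c) * b + (- b / c)\<^sup>2 * c = a - b\<^sup>2 / c"
    using \<open>c > 0\<close> by (simp add: field_simps power2_eq_square)
  then have "b\<^sup>2 / c \<le> a"
    using nonneg[of "- b / c"] by linarith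
  then show ?thesis
    using \<open>c > 0\<close> by (simp add: field_simps)
qed

context
  fixes sc :: "complex \<Rightarrow> 'v::ab_group_add \<Rightarrow> 'v" and ip :: "'v \<Rightarrow> 'v \<Rightarrow> complex"
  assumes pre_hilbert: "complex_pre_hilbert sc ip"
begin

lemma ip_conj_sym: "ip x y = cnj (ip y x)"
  and ip_add_right: "ip x (y + z) = ip x y + ip x z"
  and ip_scale_right: "ip x (sc c y) = c * ip x y"
  and ip_self_nonneg: "0 \<le> Re (ip x x)"
  using pre_hilbert unfolding complex_pre_hilbert_def by (elim conjE; iprover)+

lemma ip_add_left: "ip (x + y) z = ip x z + ip y z"
  by (subst (1 2 3) ip_conj_sym) (simp add: ip_add_right)

lemma ip_scale_left: "ip (sc c x) y = cnj c * ip x y"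
  by (subst (1 2) ip_conj_sym) (simp add: ip_scale_right)

lemma re_ip_sym: "Re (ip x y) = Re (ip y x)"
  by (subst ip_conj_sym) simp

lemma re_ip_expand:
  "Re (ip (x + sc (complex_of_real t) y) (x + sc (complex_of_real t) y)) =
     Re (ip x x) + 2 * t * Re (ip x y) + t\<^sup>2 * Re (ip y y)"
proof -
  let ?r = "complex_of_real t"
  have "ip (x + sc ?r y) (x + sc ?r y) = ip x x + ?r * ip x y + ?r * ip y x + ?r * ?r * ip y y"
    by (simp add: ip_add_left ip_add_right ip_scale_left ip_scale_right algebra_simps)
  then show ?thesis
    by (simp add: re_ip_sym[of y x] power2_eq_square)
qed

lemma re_ip_cauchy_schwarz: "(Re (ip x y))\<^sup>2 \<le> Re (ip x x) * Re (ip y y)"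
proof (rule quadratic_form_discriminant)
  fix t
  show "0 \<le> Re (ip x x) + 2 * t * Re (ip x y) + t\<^sup>2 * Re (ip y y)"
    using ip_self_nonneg[of "x + sc (complex_of_real t) y"] by (simp only: re_ip_expand)
qed (rule ip_self_nonneg)

lemma vnorm_nonneg: "0 \<le> vnorm ip x"
  unfolding vnorm_def using ip_self_nonneg by simp

lemma vnorm_triangle: "vnorm ip (x + y) \<le> vnorm ip x + vnorm ip y"
proof -
  have "Re (ip x y) \<le> sqrt (Re (ip x x) * Re (ip y y))"
    using re_ip_cauchy_schwarz real_le_rsqrt by blast
  then have "Re (ip (x + y) (x + y)) \<le> (vnorm ip x + vnorm ip y)\<^sup>2"
    using ip_self_nonneg[of x] ip_self_nonneg[of y]
    by (simp add: vnorm_def ip_add_left ip_add_right re_ip_sym[of y x] power2_eq_square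
        real_sqrt_mult algebra_simps)
  then show ?thesis
    unfolding vnorm_def[of ip "x + y"] using vnorm_nonneg[of x] vnorm_nonneg[of y]
    by (simp add: real_le_lsqrt)
qed

lemma vnorm_scale_real: "vnorm ip (sc (complex_of_real c) x) = \<bar>c\<bar> * vnorm ip x"
proof -
  have "Re (ip (sc (complex_of_real c) x) (sc (complex_of_real c) x)) = c\<^sup>2 * Re (ip x x)"
    by (simp add: ip_scale_left ip_scale_right power2_eq_square)
  then show ?thesis
    by (simp add: vnorm_def real_sqrt_mult)
qed

lemma pre_hilbert_module: "module sc"
  using pre_hilbert unfolding complex_pre_hilbert_def by (simp add: module_iff_vector_space)

lemma sc_zero_left: "sc 0 x = 0"
  and sc_one: "sc 1 x = x"
  and sc_sc: "sc a (sc b x) = sc (a * b) x"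
  using pre_hilbert_module by (simp_all add: module.scale_zero_left module.scale_one module.scale_scale)

lemma vnorm_zero: "vnorm ip 0 = 0"
  using vnorm_scale_real[of 0 0] by (simp add: sc_zero_left)

end

section \<open>Locally convex and barrelled spaces\<close>

context
  assumes tvs: "locally_convex_tvs TYPE('g::{real_vector,topological_space})"
begin

lemma tvs_continuous_translate: "continuous_on UNIV (\<lambda>x::'g. x + b)"
proof -
  have "continuous_on UNIV (\<lambda>(x::'g, y). x + y)"
    using tvs unfolding locally_convex_tvs_def by blast
  then show ?thesis
    using continuous_on_compose2[of UNIV _ UNIV "\<lambda>x. (x, b)"] by (force intro: continuous_intros)
qed

lemma tvs_continuous_scaleR: "continuous_on UNIV (\<lambda>(c, x::'g). c *\<^sub>R x)"
  using tvs unfolding locally_convex_tvs_def by blast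

lemma tvs_continuous_scaleR_right: "continuous_on UNIV (\<lambda>x::'g. a *\<^sub>R x)"
  using continuous_on_compose2[OF tvs_continuous_scaleR, of UNIV "\<lambda>x. (a, x)"]
  by (simp add: continuous_intros)

lemma tvs_continuous_scaleR_left: "continuous_on UNIV (\<lambda>c. c *\<^sub>R (x::'g))"
  using continuous_on_compose2[OF tvs_continuous_scaleR, of UNIV "\<lambda>c. (c, x)"]
  by (simp add: continuous_intros)

lemma tvs_tendsto_diff: "(\<xi> \<longlongrightarrow> (\<xi>0::'g)) F \<Longrightarrow> ((\<lambda>k. \<xi> k - \<xi>0) \<longlongrightarrow> 0) F"
  using continuous_on_tendsto_compose[OF tvs_continuous_translate[of "- \<xi>0"], of \<xi> \<xi>0 F]
  by simp

lemma tvs_tendsto_scaleR: "(\<eta> \<longlongrightarrow> (0::'g)) F \<Longrightarrow> ((\<lambda>k. a *\<^sub>R \<eta> k) \<longlongrightarrow> 0) F"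
  using continuous_on_tendsto_compose[OF tvs_continuous_scaleR_right[of a], of \<eta> 0 F]
  by simp

lemma tvs_eventually_scaleR_in_nhd:
  assumes "open U" "(0::'g) \<in> U"
  shows "eventually (\<lambda>z. a *\<^sub>R z \<in> U) (nhds 0)"
  using topological_tendstoD[OF tvs_tendsto_scaleR[OF filterlim_ident] assms] by simp

lemma tvs_absorbing:
  assumes "open U" "(0::'g) \<in> U"
  shows "\<exists>t>0. \<forall>s>t. x \<in> (\<lambda>y. s *\<^sub>R y) ` U"
proof -
  have "((\<lambda>c. c *\<^sub>R x) \<longlongrightarrow> 0) (nhds 0)"
    using continuous_on_tendsto_compose[OF tvs_continuous_scaleR_left filterlim_ident, of 0 x]
    by simp
  then have "eventually (\<lambda>c. c *\<^sub>R x \<in> U) (nhds 0)"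
    using assms by (rule topological_tendstoD)
  then obtain d where d: "d > 0" "\<And>c. \<bar>c\<bar> < d \<Longrightarrow> c *\<^sub>R x \<in> U"
    unfolding eventually_nhds_metric dist_real_def by auto
  show ?thesis
  proof (intro exI[of _ "1 / d"] conjI allI impI)
    fix s :: real assume "s > 1 / d"
    moreover from this d(1) have "s > 0"
      by (meson less_trans zero_less_divide_1_iff)
    ultimately have "inverse s *\<^sub>R x \<in> U"
      using d by (intro d(2)) (simp add: field_simps)
    then show "x \<in> (\<lambda>y. s *\<^sub>R y) ` U"
      using \<open>s > 0\<close> by (intro image_eqI[of _ _ "inverse s *\<^sub>R x"]) auto
  qed (use d in simp)
qed

lemma tvs_absorbing_finite:
  assumes "open U" "(0::'g) \<in> U" "finite X"
  shows "\<exists>t>0. \<forall>s>t. \<forall>x\<in>X. x \<in> (\<lambda>y. s *\<^sub>R y) ` U"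
  using \<open>finite X\<close>
proof (induction X rule: finite_induct)
  case empty
  show ?case by (intro exI[of _ 1]) auto
next
  case (insert x X)
  obtain t1 where "t1 > 0" "\<forall>s>t1. \<forall>x\<in>X. x \<in> (\<lambda>y. s *\<^sub>R y) ` U"
    using insert.IH by blast
  moreover obtain t2 where "t2 > 0" "\<forall>s>t2. x \<in> (\<lambda>y. s *\<^sub>R y) ` U"
    using tvs_absorbing[OF assms(1,2)] by blast
  ultimately show ?case
    by (intro exI[of _ "max t1 t2"]) auto
qed

end

definition real_seminorm :: "('a::real_vector \<Rightarrow> real) \<Rightarrow> bool" where
  "real_seminorm q \<longleftrightarrow> (\<forall>x y. q (x + y) \<le> q x + q y) \<and> (\<forall>c x. q (c *\<^sub>R x) \<le> \<bar>c\<bar> * q x)"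

lemma real_seminorm_add: "real_seminorm q \<Longrightarrow> q (x + y) \<le> q x + q y"
  and real_seminorm_scaleR: "real_seminorm q \<Longrightarrow> q (c *\<^sub>R x) \<le> \<bar>c\<bar> * q x"
  unfolding real_seminorm_def by simp_all

lemma real_seminorm_nonneg:
  assumes "real_seminorm q" shows "0 \<le> q x"
proof -
  have "q 0 \<le> 0"
    using real_seminorm_scaleR[OF assms, of 0 x] by simp
  moreover have "q 0 \<le> q 0 + q 0"
    using real_seminorm_add[OF assms, of 0 0] by simp
  moreover have "q 0 \<le> q x + q (- x)"
    using real_seminorm_add[OF assms, of x "- x"] by simp
  moreover have "q (- x) \<le> q x"
    using real_seminorm_scaleR[OF assms, of "- 1" x] by simp
  ultimately show ?thesis
    by linarith
qed

lemma real_seminorm_diff_commute: "real_seminorm q \<Longrightarrow> q (x - y) \<le> q (y - x)"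
  using real_seminorm_scaleR[of q "-1" "y - x"] by simp

lemma convex_seminorms_le_one:
  fixes q :: "'k \<Rightarrow> 'a::real_vector \<Rightarrow> real"
  assumes seminorm: "\<And>k. real_seminorm (q k)"
  shows "convex {x. \<forall>k. q k x \<le> 1}"
  unfolding convex_def
proof (intro ballI allI impI CollectI)
  fix x y k and u v :: real
  assume "x \<in> {x. \<forall>k. q k x \<le> 1}" "y \<in> {x. \<forall>k. q k x \<le> 1}" "0 \<le> u" "0 \<le> v" "u + v = 1"
  then have "u * q k x + v * q k y \<le> u + v"
    by (intro add_mono) (simp_all add: mult_left_le)
  moreover have "q k (u *\<^sub>R x + v *\<^sub>R y) \<le> \<bar>u\<bar> * q k x + \<bar>v\<bar> * q k y"
    using real_seminorm_add[OF seminorm] real_seminorm_scaleR[OF seminorm] by (meson add_mono order_trans)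
  ultimately show "q k (u *\<^sub>R x + v *\<^sub>R y) \<le> 1"
    using \<open>0 \<le> u\<close> \<open>0 \<le> v\<close> \<open>u + v = 1\<close> by simp
qed

lemma circled_seminorms_le_one:
  fixes q :: "'k \<Rightarrow> 'a::real_vector \<Rightarrow> real"
  assumes seminorm: "\<And>k. real_seminorm (q k)"
  shows "circled {x. \<forall>k. q k x \<le> 1}"
  unfolding circled_def
proof (intro allI impI subsetI)
  fix c :: real and y assume c: "\<bar>c\<bar> \<le> 1" and "y \<in> (\<lambda>x. c *\<^sub>R x) ` {x. \<forall>k. q k x \<le> 1}"
  then obtain x where x: "\<forall>k. q k x \<le> 1" "y = c *\<^sub>R x" by blast
  have "q k (c *\<^sub>R x) \<le> 1" for k
  proof -
    have "q k (c *\<^sub>R x) \<le> \<bar>c\<bar> * q k x"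
      by (rule real_seminorm_scaleR[OF seminorm])
    also have "\<dots> \<le> 1"
      using c x(1) real_seminorm_nonneg[OF seminorm] by (simp add: mult_le_one)
    finally show ?thesis .
  qed
  then show "y \<in> {x. \<forall>k. q k x \<le> 1}"
    using x(2) by simp
qed

lemma absorbing_seminorms_le_one:
  fixes q :: "'k \<Rightarrow> 'a::real_vector \<Rightarrow> real"
  assumes seminorm: "\<And>k. real_seminorm (q k)"
    and bounded: "\<And>x. bdd_above (range (\<lambda>k. q k x))"
  shows "absorbing {x. \<forall>k. q k x \<le> 1}"
  unfolding absorbing_def
proof
  fix x
  obtain K0 where "\<And>k. q k x \<le> K0"
    using bounded[of x] unfolding bdd_above_def by blast
  then obtain K where K: "\<And>k. q k x \<le> K" and "K \<ge> 1"
    by (meson max.cobounded1 max.coboundedI2)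
  have "q k (c *\<^sub>R x) \<le> 1" if "\<bar>c\<bar> \<le> 1 / K" for c k
  proof -
    have "q k (c *\<^sub>R x) \<le> \<bar>c\<bar> * q k x"
      by (rule real_seminorm_scaleR[OF seminorm])
    also have "\<dots> \<le> (1 / K) * K"
      using K[of k] that \<open>K \<ge> 1\<close> real_seminorm_nonneg[OF seminorm] by (intro mult_mono) auto
    finally show ?thesis
      using \<open>K \<ge> 1\<close> by simp
  qed
  then show "\<exists>t>0. \<forall>c. \<bar>c\<bar> \<le> t \<longrightarrow> c *\<^sub>R x \<in> {x. \<forall>k. q k x \<le> 1}"
    using \<open>K \<ge> 1\<close> by (intro exI[of _ "1 / K"]) auto
qed

context
  assumes tvs: "locally_convex_tvs TYPE('g::{real_vector,topological_space})"
begin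

lemma real_seminorm_continuous:
  fixes q :: "'g \<Rightarrow> real"
  assumes q: "real_seminorm q" and lim0: "(q \<longlongrightarrow> 0) (nhds 0)"
  shows "continuous_on UNIV q"
  unfolding continuous_on_def
proof
  fix x
  have lim: "((\<lambda>y. q (y - x)) \<longlongrightarrow> 0) (nhds x)"
    using filterlim_compose[OF lim0 tvs_tendsto_diff[OF tvs filterlim_ident]] .
  have bound: "norm (q y - q x) \<le> q (y - x)" for y
  proof -
    have "q y \<le> q (y - x) + q x" "q x \<le> q (x - y) + q y"
      using real_seminorm_add[OF q, of "y - x" x] real_seminorm_add[OF q, of "x - y" y] by simp_all
    then show ?thesis
      using real_seminorm_diff_commute[OF q, of x y] unfolding real_norm_def abs_le_iff by linarith
  qed
  have "((\<lambda>y. q y - q x) \<longlongrightarrow> 0) (nhds x)"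
    by (rule Lim_null_comparison[OF always_eventually lim]) (use bound in blast)
  then have "(q \<longlongrightarrow> q x) (nhds x)"
    using LIM_zero_iff by blast
  then show "(q \<longlongrightarrow> q x) (at x within UNIV)"
    by (rule tendsto_mono[OF at_within_le_nhds])
qed

lemma barrelled_uniform_boundedness:
  fixes q :: "'k \<Rightarrow> 'g \<Rightarrow> real"
  assumes barrelled: "barrelled TYPE('g)"
    and seminorm: "\<And>k. real_seminorm (q k)"
    and closed: "\<And>k. closed {x. q k x \<le> 1}"
    and bounded: "\<And>x. bdd_above (range (\<lambda>k. q k x))"
  obtains V where "open V" "0 \<in> V" "\<And>k x. x \<in> V \<Longrightarrow> q k x \<le> 1"
proof -
  have "closed {x. \<forall>k. q k x \<le> 1}"
    using closed by (simp add: Collect_all_eq closed_INT)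
  moreover note convex_seminorms_le_one[of q, OF seminorm] circled_seminorms_le_one[of q, OF seminorm]
    absorbing_seminorms_le_one[of q, OF seminorm bounded]
  ultimately obtain V where "open V" "0 \<in> V" "V \<subseteq> {x. \<forall>k. q k x \<le> 1}"
    using barrelled[unfolded barrelled_def, rule_format, of "{x. \<forall>k. q k x \<le> 1}"] by auto
  then show ?thesis
    using that by blast
qed

lemma uniformly_bounded_seminorms_tendsto_zero:
  fixes q :: "nat \<Rightarrow> 'g \<Rightarrow> real"
  assumes seminorm: "\<And>k. real_seminorm (q k)"
    and V: "open V" "0 \<in> V" "\<And>k x. x \<in> V \<Longrightarrow> q k x \<le> 1"
    and lim: "\<eta> \<longlonglongrightarrow> 0"
  shows "(\<lambda>k. q k (\<eta> k)) \<longlonglongrightarrow> 0"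
proof (rule tendstoI)
  fix e :: real assume "e > 0"
  have "eventually (\<lambda>k. (2 / e) *\<^sub>R \<eta> k \<in> V) sequentially"
    using topological_tendstoD[OF tvs_tendsto_scaleR[OF tvs lim] V(1,2)] .
  then show "eventually (\<lambda>k. dist (q k (\<eta> k)) 0 < e) sequentially"
  proof eventually_elim
    case (elim k)
    have "q k (\<eta> k) = q k ((e / 2) *\<^sub>R ((2 / e) *\<^sub>R \<eta> k))"
      using \<open>e > 0\<close> by simp
    also have "\<dots> \<le> e / 2 * q k ((2 / e) *\<^sub>R \<eta> k)"
      using real_seminorm_scaleR[OF seminorm] \<open>e > 0\<close> by (metis abs_of_pos half_gt_zero)
    also have "\<dots> \<le> e / 2"
      using V(3)[OF elim] \<open>e > 0\<close> by (simp add: mult_left_le)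
    finally show ?case
      using real_seminorm_nonneg[OF seminorm, of k] \<open>e > 0\<close> by simp
  qed
qed

end

section \<open>Products of representation operators\<close>

lemma pin_cong: "(\<And>i. i < n \<Longrightarrow> f i = g i) \<Longrightarrow> pin rho n f = pin rho n g"
  by (induction n) auto

text \<open>The set \<open>B \<times> {\<xi>}\<close> of the paper: \<open>\<xi>\<close> becomes the factor applied first.\<close>

definition gpow_cons :: "nat \<Rightarrow> 'g \<Rightarrow> (nat \<Rightarrow> 'g) \<Rightarrow> nat \<Rightarrow> 'g" where
  "gpow_cons n \<xi> f = restrict (case_nat \<xi> f) {..<Suc n}"

lemma gpow_cons_PiE: "gpow_cons n \<xi> f \<in> PiE {..<Suc n} (\<lambda>_. UNIV)"
  by (simp add: gpow_cons_def)

lemma pin_Suc_first: "pin rho (Suc n) f \<psi> = pin rho n (\<lambda>i. f (Suc i)) (rho (f 0) \<psi>)"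
  by (induction n arbitrary: \<psi>) auto

lemma pin_gpow_cons: "pin rho (Suc n) (gpow_cons n \<xi> f) \<psi> = pin rho n f (rho \<xi> \<psi>)"
proof -
  have "pin rho n (\<lambda>i. gpow_cons n \<xi> f (Suc i)) = pin rho n f"
    by (rule pin_cong) (simp add: gpow_cons_def)
  then show ?thesis
    unfolding pin_Suc_first by (simp add: gpow_cons_def)
qed

context
  fixes br :: "'g::real_vector \<Rightarrow> 'g \<Rightarrow> 'g" and sc :: "complex \<Rightarrow> 'v::ab_group_add \<Rightarrow> 'v"
    and ip :: "'v \<Rightarrow> 'v \<Rightarrow> complex" and rho :: "'g \<Rightarrow> 'v \<Rightarrow> 'v"
  assumes rep: "unitary_rep br sc ip rho"
begin

lemma unitary_rep_pre_hilbert: "complex_pre_hilbert sc ip"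
  using rep unfolding unitary_rep_def by (rule conjunct1)

lemma rho_add_right: "rho x (u + v) = rho x u + rho x v"
  using rep unfolding unitary_rep_def by blast

lemma rho_scale_right: "rho x (sc c v) = sc c (rho x v)"
  using rep unfolding unitary_rep_def by blast

lemma rho_add_left: "rho (x + y) v = rho x v + rho y v"
  using rep unfolding unitary_rep_def by blast

lemma rho_scaleR_left: "rho (a *\<^sub>R x) v = sc (complex_of_real a) (rho x v)"
  using rep unfolding unitary_rep_def by blast

lemma rho_zero_left: "rho 0 v = 0"
  using rho_scaleR_left[of 0 0 v] sc_zero_left[OF unitary_rep_pre_hilbert] by simp

lemma rho_diff_left: "rho (x - y) v = rho x v - rho y v"
  using rho_add_left[of "x - y" y v] by simp

lemma rho_diff_right: "rho x (u - v) = rho x u - rho x v"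
  using rho_add_right[of x "u - v" v] by simp

lemma rho_diff_expand: "rho x u - rho y v = rho (x - y) (u - v) + rho y (u - v) + rho (x - y) v"
  by (simp add: rho_diff_left rho_diff_right)

lemma pin_add: "pin rho n f (u + v) = pin rho n f u + pin rho n f v"
  by (induction n) (auto simp: rho_add_right)

lemma pin_zero: "pin rho n f 0 = 0"
  using pin_add[of n f 0 0] by simp

lemma pin_scale: "pin rho n f (sc c v) = sc c (pin rho n f v)"
  by (induction n) (auto simp: rho_scale_right)

lemma pin_scaleR:
  "pin rho n (\<lambda>i. c i *\<^sub>R h i) \<phi> = sc (complex_of_real (\<Prod>i<n. c i)) (pin rho n h \<phi>)"
proof (induction n)
  case 0
  then show ?case
    using sc_one[OF unitary_rep_pre_hilbert] by simp
next
  case (Suc n)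
  then show ?case
    using sc_sc[OF unitary_rep_pre_hilbert]
    by (simp add: rho_scaleR_left rho_scale_right mult.commute)
qed

end

section \<open>The seminorms \<open>p\<^sub>B\<close>\<close>

text \<open>For unbounded \<open>B\<close> the supremum is a junk value, so \<open>bounded_gpow n B\<close> is assumed
  wherever \<open>p\<^sub>B\<close> is used.\<close>

definition sup_seminorm ::
  "('v \<Rightarrow> 'v \<Rightarrow> complex) \<Rightarrow> ('g \<Rightarrow> 'v \<Rightarrow> 'v) \<Rightarrow> nat \<Rightarrow> (nat \<Rightarrow> 'g) set \<Rightarrow> 'v \<Rightarrow> real" where
  "sup_seminorm ip rho n B \<psi> = (SUP f\<in>B. vnorm ip (pin rho n f \<psi>))"

lemma bounded_gpow_scaled_into:
  assumes "bounded_gpow n B" "open U" "0 \<in> U"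
  obtains s where "s > 0" "\<And>f i. f \<in> B \<Longrightarrow> i < n \<Longrightarrow> inverse s *\<^sub>R f i \<in> U"
proof -
  obtain t where "t > 0" and t: "\<And>s f i. s > t \<Longrightarrow> f \<in> B \<Longrightarrow> i < n \<Longrightarrow> f i \<in> (\<lambda>x. s *\<^sub>R x) ` U"
    using assms unfolding bounded_gpow_def by meson
  have "inverse (t + 1) *\<^sub>R f i \<in> U" if "f \<in> B" "i < n" for f i
    using t[of "t + 1", OF _ that] \<open>t > 0\<close> by auto
  with \<open>t > 0\<close> show ?thesis
    using that[of "t + 1"] by simp
qed

lemma sup_seminorm_gpow_cons:
  "sup_seminorm ip rho (Suc n) (gpow_cons n \<xi> ` B) \<psi> = sup_seminorm ip rho n B (rho \<xi> \<psi>)"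
  by (simp add: sup_seminorm_def image_image pin_gpow_cons del: pin.simps)

context
  assumes tvs: "locally_convex_tvs TYPE('g::{real_vector,topological_space})"
begin

lemma bounded_gpow_singleton:
  assumes "f \<in> PiE {..<n} (\<lambda>_. UNIV)" shows "bounded_gpow n {f :: nat \<Rightarrow> 'g}"
  unfolding bounded_gpow_def
proof (intro conjI allI impI)
  fix U :: "'g set" assume "open U \<and> 0 \<in> U"
  then obtain t where "t > 0" "\<forall>s>t. \<forall>x\<in>f ` {..<n}. x \<in> (\<lambda>y. s *\<^sub>R y) ` U"
    using tvs_absorbing_finite[OF tvs, of U "f ` {..<n}"] by auto
  then show "\<exists>t>0. \<forall>s>t. \<forall>g\<in>{f}. \<forall>i<n. g i \<in> (\<lambda>x. s *\<^sub>R x) ` U"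
    by auto
qed (use assms in simp)

lemma bounded_gpow_gpow_cons:
  assumes "bounded_gpow n B" shows "bounded_gpow (Suc n) (gpow_cons n \<xi> ` (B :: (nat \<Rightarrow> 'g) set))"
  unfolding bounded_gpow_def
proof (intro conjI allI impI)
  show "gpow_cons n \<xi> ` B \<subseteq> PiE {..<Suc n} (\<lambda>_. UNIV)"
    by (rule image_subsetI) (rule gpow_cons_PiE)
  fix U :: "'g set" assume U: "open U \<and> 0 \<in> U"
  obtain t1 where "t1 > 0" and t1: "\<forall>s>t1. \<forall>f\<in>B. \<forall>i<n. f i \<in> (\<lambda>x. s *\<^sub>R x) ` U"
    using assms[unfolded bounded_gpow_def, THEN conjunct2, rule_format, OF U] by blast
  obtain t2 where "t2 > 0" and t2: "\<forall>s>t2. \<xi> \<in> (\<lambda>x. s *\<^sub>R x) ` U"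
    using tvs_absorbing[OF tvs, of U \<xi>] U by auto
  have "g i \<in> (\<lambda>x. s *\<^sub>R x) ` U"
    if "s > max t1 t2" "g \<in> gpow_cons n \<xi> ` B" "i < Suc n" for s g i
    using that t1 t2 by (cases i) (auto simp: gpow_cons_def)
  with \<open>t1 > 0\<close> show "\<exists>t>0. \<forall>s>t. \<forall>g\<in>gpow_cons n \<xi> ` B. \<forall>i<Suc n. g i \<in> (\<lambda>x. s *\<^sub>R x) ` U"
    by (intro exI[of _ "max t1 t2"]) auto
qed

end

context
  fixes br :: "'g::{real_vector,topological_space} \<Rightarrow> 'g \<Rightarrow> 'g"
    and sc :: "complex \<Rightarrow> 'v::ab_group_add \<Rightarrow> 'v"
    and ip :: "'v \<Rightarrow> 'v \<Rightarrow> complex" and rho :: "'g \<Rightarrow> 'v \<Rightarrow> 'v"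
  assumes rep: "unitary_rep br sc ip rho" and cont: "continuous_rep ip rho"
begin

private lemmas pre_hilbert = unitary_rep_pre_hilbert[OF rep]

lemma pin_small_near_zero:
  obtains W where "open W" "0 \<in> W"
    "\<And>h. (\<And>i. i < Suc n \<Longrightarrow> h i \<in> W) \<Longrightarrow> vnorm ip (pin rho (Suc n) h \<phi>) < 1"
proof -
  define S where "S = {f \<in> topspace (gpow_top (Suc n)). pin rho (Suc n) f \<phi> \<in> {v. vnorm ip (v - 0) < 1}}"
  have "openin (seminorm_topology {vnorm ip}) {v. vnorm ip (v - 0) < 1}"
    by (rule openin_seminorm_ball) (auto intro: vnorm_triangle[OF pre_hilbert])
  then have "openin (gpow_top (Suc n)) S"
    unfolding S_def using cont continuous_rep_def openin_continuous_map_preimage by blast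
  moreover have "restrict (\<lambda>_. 0) {..<Suc n} \<in> S"
    unfolding S_def using rho_zero_left[OF rep] vnorm_zero[OF pre_hilbert] by (simp add: PiE_def)
  ultimately obtain U where U: "\<forall>i\<in>{..<Suc n}. openin euclidean (U i)"
    "restrict (\<lambda>_. 0) {..<Suc n} \<in> PiE {..<Suc n} U" "PiE {..<Suc n} U \<subseteq> S"
    unfolding openin_product_topology_alt by meson
  define W where "W = (\<Inter>i<Suc n. U i)"
  have "vnorm ip (pin rho (Suc n) h \<phi>) < 1" if "\<And>i. i < Suc n \<Longrightarrow> h i \<in> W" for h
  proof -
    have "restrict h {..<Suc n} \<in> PiE {..<Suc n} U"
      using that unfolding W_def by (simp add: restrict_PiE_iff)
    then have "restrict h {..<Suc n} \<in> S"
      using U(3) by (rule subsetD[rotated])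
    moreover have "pin rho (Suc n) (restrict h {..<Suc n}) = pin rho (Suc n) h"
      by (rule pin_cong) simp
    ultimately show ?thesis
      unfolding S_def by (simp del: pin.simps)
  qed
  moreover have "open W" "0 \<in> W"
    using U(1,2) unfolding W_def by (auto simp: PiE_iff)
  ultimately show ?thesis
    using that by blast
qed

lemma pin_norm_bound_near_zero:
  obtains W where "open W" "0 \<in> W"
    "\<And>c h. (\<And>i. i < Suc n \<Longrightarrow> h i \<in> W) \<Longrightarrow>
       vnorm ip (pin rho (Suc n) (\<lambda>i. c i *\<^sub>R h i) \<phi>) \<le> \<bar>\<Prod>i<Suc n. c i\<bar>"
proof -
  obtain W where W: "open W" "0 \<in> W"
    and small: "\<And>h. (\<And>i. i < Suc n \<Longrightarrow> h i \<in> W) \<Longrightarrow> vnorm ip (pin rho (Suc n) h \<phi>) < 1"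
    using pin_small_near_zero[of n \<phi>] by blast
  have "vnorm ip (pin rho (Suc n) (\<lambda>i. c i *\<^sub>R h i) \<phi>) \<le> \<bar>\<Prod>i<Suc n. c i\<bar>"
    if "\<And>i. i < Suc n \<Longrightarrow> h i \<in> W" for c h
  proof -
    have "vnorm ip (pin rho (Suc n) h \<phi>) \<le> 1"
      using small[of h] that by (meson less_imp_le)
    then have "\<bar>\<Prod>i<Suc n. c i\<bar> * vnorm ip (pin rho (Suc n) h \<phi>) \<le> \<bar>\<Prod>i<Suc n. c i\<bar>"
      by (rule mult_left_le) simp
    then show ?thesis
      by (simp only: pin_scaleR[OF rep] vnorm_scale_real[OF pre_hilbert])
  qed
  with W show ?thesis
    using that by blast
qed

lemma sup_seminorm_bdd_above:
  assumes "bounded_gpow n B"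
  shows "bdd_above ((\<lambda>f. vnorm ip (pin rho n f \<psi>)) ` B)"
proof (cases n)
  case 0
  then show ?thesis
    by (auto intro: bdd_aboveI[of _ "vnorm ip \<psi>"])
next
  case (Suc m)
  obtain W where W: "open W" "0 \<in> W"
    "\<And>c h. (\<And>i. i < Suc m \<Longrightarrow> h i \<in> W) \<Longrightarrow>
       vnorm ip (pin rho (Suc m) (\<lambda>i. c i *\<^sub>R h i) \<psi>) \<le> \<bar>\<Prod>i<Suc m. c i\<bar>"
    using pin_norm_bound_near_zero[of m \<psi>] by blast
  obtain s where "s > 0" and s: "\<And>f i. f \<in> B \<Longrightarrow> i < n \<Longrightarrow> inverse s *\<^sub>R f i \<in> W"
    using bounded_gpow_scaled_into[OF assms W(1,2)] by blast
  have "vnorm ip (pin rho n f \<psi>) \<le> \<bar>\<Prod>i<Suc m. s\<bar>" if "f \<in> B" for f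
  proof -
    have "pin rho n f = pin rho (Suc m) (\<lambda>i. s *\<^sub>R (inverse s *\<^sub>R f i))"
      unfolding Suc using \<open>s > 0\<close> by (intro pin_cong) simp
    then show ?thesis
      using W(3)[of "\<lambda>i. inverse s *\<^sub>R f i" "\<lambda>_. s"] s[OF that] Suc by simp
  qed
  then show ?thesis
    by (rule bdd_aboveI2)
qed

lemma sup_seminorm_upper:
  "bounded_gpow n B \<Longrightarrow> f \<in> B \<Longrightarrow> vnorm ip (pin rho n f \<psi>) \<le> sup_seminorm ip rho n B \<psi>"
  unfolding sup_seminorm_def by (rule cSUP_upper) (auto intro: sup_seminorm_bdd_above)

lemma sup_seminorm_nonneg: "B \<noteq> {} \<Longrightarrow> bounded_gpow n B \<Longrightarrow> 0 \<le> sup_seminorm ip rho n B \<psi>"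
  using sup_seminorm_upper vnorm_nonneg[OF pre_hilbert] by (meson ex_in_conv order_trans)

lemma sup_seminorm_zero: "B \<noteq> {} \<Longrightarrow> sup_seminorm ip rho n B 0 = 0"
  by (simp add: sup_seminorm_def pin_zero[OF rep] vnorm_zero[OF pre_hilbert] del: pin.simps)

lemma sup_seminorm_add:
  assumes "B \<noteq> {}" "bounded_gpow n B"
  shows "sup_seminorm ip rho n B (\<psi> + \<phi>) \<le> sup_seminorm ip rho n B \<psi> + sup_seminorm ip rho n B \<phi>"
  unfolding sup_seminorm_def[of _ _ _ _ "\<psi> + \<phi>"]
proof (rule cSUP_least[OF assms(1)])
  fix f assume "f \<in> B"
  have "vnorm ip (pin rho n f (\<psi> + \<phi>)) \<le> vnorm ip (pin rho n f \<psi>) + vnorm ip (pin rho n f \<phi>)"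
    unfolding pin_add[OF rep] by (rule vnorm_triangle[OF pre_hilbert])
  also have "\<dots> \<le> sup_seminorm ip rho n B \<psi> + sup_seminorm ip rho n B \<phi>"
    by (intro add_mono sup_seminorm_upper[OF assms(2) \<open>f \<in> B\<close>])
  finally show "vnorm ip (pin rho n f (\<psi> + \<phi>)) \<le> \<dots>" .
qed

lemma sup_seminorm_scale_real:
  assumes "B \<noteq> {}" "bounded_gpow n B"
  shows "sup_seminorm ip rho n B (sc (complex_of_real c) \<psi>) \<le> \<bar>c\<bar> * sup_seminorm ip rho n B \<psi>"
  unfolding sup_seminorm_def[of _ _ _ _ "sc _ \<psi>"]
proof (rule cSUP_least[OF assms(1)])
  fix f assume "f \<in> B"
  then show "vnorm ip (pin rho n f (sc (complex_of_real c) \<psi>)) \<le> \<bar>c\<bar> * sup_seminorm ip rho n B \<psi>"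
    using sup_seminorm_upper[OF assms(2)]
    by (simp add: pin_scale[OF rep] vnorm_scale_real[OF pre_hilbert] mult_left_mono del: pin.simps)
qed

lemma real_seminorm_sup_seminorm_rho:
  assumes "B \<noteq> {}" "bounded_gpow n B"
  shows "real_seminorm (\<lambda>z. sup_seminorm ip rho n B (rho z \<psi>))"
  unfolding real_seminorm_def
  using sup_seminorm_add[OF assms] sup_seminorm_scale_real[OF assms]
  by (simp add: rho_add_left[OF rep] rho_scaleR_left[OF rep])

lemma limitin_sup_seminorms:
  assumes adm: "\<And>n B. C n B \<Longrightarrow> B \<noteq> {} \<and> bounded_gpow n B"
  shows "limitin (seminorm_topology {sup_seminorm ip rho n B | n B. C n B}) x l F \<longleftrightarrow>
    (\<forall>n B. C n B \<longrightarrow> ((\<lambda>k. sup_seminorm ip rho n B (x k - l)) \<longlongrightarrow> 0) F)"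
proof -
  have "limitin (seminorm_topology {sup_seminorm ip rho n B | n B. C n B}) x l F \<longleftrightarrow>
      (\<forall>p\<in>{sup_seminorm ip rho n B | n B. C n B}. ((\<lambda>k. p (x k - l)) \<longlongrightarrow> 0) F)"
  proof (rule limitin_seminorm_topology)
    fix p assume "p \<in> {sup_seminorm ip rho n B | n B. C n B}"
    then obtain n B where "B \<noteq> {}" "bounded_gpow n B" "p = sup_seminorm ip rho n B"
      using adm by blast
    then show "p (a + b) \<le> p a + p b" "0 \<le> p a" "p 0 = 0" for a b
      by (simp_all add: sup_seminorm_add sup_seminorm_nonneg sup_seminorm_zero)
  qed
  then show ?thesis
    by auto
qed

lemma sup_seminorm_rho_bound_near_zero:
  assumes B: "B \<noteq> {}" "bounded_gpow n B"
  obtains W s where "open W" "0 \<in> W" "s > 0"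
    "\<And>\<delta> z. \<delta> > 0 \<Longrightarrow> inverse \<delta> *\<^sub>R z \<in> W \<Longrightarrow> sup_seminorm ip rho n B (rho z \<phi>) \<le> \<delta> * s ^ n"
proof -
  obtain W where W: "open W" "0 \<in> W"
    "\<And>c h. (\<And>i. i < Suc n \<Longrightarrow> h i \<in> W) \<Longrightarrow>
       vnorm ip (pin rho (Suc n) (\<lambda>i. c i *\<^sub>R h i) \<phi>) \<le> \<bar>\<Prod>i<Suc n. c i\<bar>"
    using pin_norm_bound_near_zero[of n \<phi>] by blast
  obtain s where "s > 0" and s: "\<And>f i. f \<in> B \<Longrightarrow> i < n \<Longrightarrow> inverse s *\<^sub>R f i \<in> W"
    using bounded_gpow_scaled_into[OF B(2) W(1,2)] by blast
  have "sup_seminorm ip rho n B (rho z \<phi>) \<le> \<delta> * s ^ n"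
    if "\<delta> > 0" "inverse \<delta> *\<^sub>R z \<in> W" for \<delta> z
    unfolding sup_seminorm_def
  proof (rule cSUP_least[OF B(1)])
    fix f assume "f \<in> B"
    define c where "c = case_nat \<delta> (\<lambda>_. s)"
    define h where "h = case_nat (inverse \<delta> *\<^sub>R z) (\<lambda>j. inverse s *\<^sub>R f j)"
    have "pin rho (Suc n) (gpow_cons n z f) = pin rho (Suc n) (\<lambda>i. c i *\<^sub>R h i)"
      using \<open>\<delta> > 0\<close> \<open>s > 0\<close> by (intro pin_cong) (simp add: gpow_cons_def c_def h_def split: nat.split)
    then have "vnorm ip (pin rho n f (rho z \<phi>)) = vnorm ip (pin rho (Suc n) (\<lambda>i. c i *\<^sub>R h i) \<phi>)"
      by (metis pin_gpow_cons)
    also have "\<dots> \<le> \<bar>\<Prod>i<Suc n. c i\<bar>"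
    proof (rule W(3))
      fix i assume "i < Suc n"
      then show "h i \<in> W"
        using s[OF \<open>f \<in> B\<close>] \<open>inverse \<delta> *\<^sub>R z \<in> W\<close> by (cases i) (simp_all add: h_def)
    qed
    also have "\<dots> = \<delta> * s ^ n"
      unfolding prod.lessThan_Suc_shift using \<open>\<delta> > 0\<close> \<open>s > 0\<close> by (simp add: c_def abs_mult)
    finally show "vnorm ip (pin rho n f (rho z \<phi>)) \<le> \<delta> * s ^ n" .
  qed
  with W(1,2) \<open>s > 0\<close> show ?thesis
    using that by blast
qed

lemma sup_seminorm_rho_tendsto_zero:
  assumes tvs: "locally_convex_tvs TYPE('g)" and B: "B \<noteq> {}" "bounded_gpow n B"
  shows "((\<lambda>z. sup_seminorm ip rho n B (rho z \<phi>)) \<longlongrightarrow> 0) (nhds 0)"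
proof (rule tendstoI)
  fix e :: real assume "e > 0"
  obtain W s where W: "open W" "0 \<in> W" and "s > 0" and bound:
    "\<And>\<delta> z. \<delta> > 0 \<Longrightarrow> inverse \<delta> *\<^sub>R z \<in> W \<Longrightarrow> sup_seminorm ip rho n B (rho z \<phi>) \<le> \<delta> * s ^ n"
    using sup_seminorm_rho_bound_near_zero[OF B, of \<phi>] by blast
  define \<delta> where "\<delta> = e / (2 * s ^ n)"
  have "\<delta> > 0" "\<delta> * s ^ n = e / 2"
    using \<open>e > 0\<close> \<open>s > 0\<close> by (simp_all add: \<delta>_def)
  have "eventually (\<lambda>z. inverse \<delta> *\<^sub>R z \<in> W) (nhds 0)"
    by (rule tvs_eventually_scaleR_in_nhd[OF tvs W])
  then show "eventually (\<lambda>z. dist (sup_seminorm ip rho n B (rho z \<phi>)) 0 < e) (nhds 0)"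
  proof eventually_elim
    case (elim z)
    show ?case
      using bound[OF \<open>\<delta> > 0\<close> elim] sup_seminorm_nonneg[OF B] \<open>\<delta> * s ^ n = e / 2\<close> \<open>e > 0\<close>
      by simp
  qed
qed

end

section \<open>Sequential continuity of the action\<close>

lemma sup_seminorm_singleton: "sup_seminorm ip rho n {f} = (\<lambda>\<psi>. vnorm ip (pin rho n f \<psi>))"
  by (rule ext) (simp add: sup_seminorm_def)

lemma weak_top_eq_sup_seminorms:
  "weak_top ip rho =
     seminorm_topology {sup_seminorm ip rho n B | n B. \<exists>f\<in>PiE {..<n} (\<lambda>_. UNIV). B = {f}}"
proof -
  have "{(\<lambda>\<psi>. vnorm ip (pin rho n f \<psi>)) | n f. f \<in> PiE {..<n} (\<lambda>_. UNIV)} =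
        {sup_seminorm ip rho n B | n B. \<exists>f\<in>PiE {..<n} (\<lambda>_. UNIV). B = {f}}"
    by (auto simp flip: sup_seminorm_singleton)
  then show ?thesis
    unfolding weak_top_def by simp
qed

lemma strong_top_eq_sup_seminorms:
  "strong_top ip rho = seminorm_topology {sup_seminorm ip rho n B | n B. B \<noteq> {} \<and> bounded_gpow n B}"
  unfolding strong_top_def sup_seminorm_def[abs_def] ..

context
  fixes br :: "'g::{real_vector,topological_space} \<Rightarrow> 'g \<Rightarrow> 'g"
    and sc :: "complex \<Rightarrow> 'v::ab_group_add \<Rightarrow> 'v"
    and ip :: "'v \<Rightarrow> 'v \<Rightarrow> complex" and rho :: "'g \<Rightarrow> 'v \<Rightarrow> 'v"
  assumes rep: "unitary_rep br sc ip rho" and cont: "continuous_rep ip rho"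
    and tvs: "locally_convex_tvs TYPE('g)" and barrelled: "barrelled TYPE('g)"
begin

lemma sup_seminorm_rho_tendsto_zero_joint:
  assumes B: "B \<noteq> {}" "bounded_gpow n B"
    and pointwise: "\<And>x. (\<lambda>k. sup_seminorm ip rho n B (rho x (\<phi> k))) \<longlonglongrightarrow> 0"
    and lim: "\<eta> \<longlonglongrightarrow> 0"
  shows "(\<lambda>k. sup_seminorm ip rho n B (rho (\<eta> k) (\<phi> k))) \<longlonglongrightarrow> 0"
proof -
  define q where "q k z = sup_seminorm ip rho n B (rho z (\<phi> k))" for k z
  have seminorm: "real_seminorm (q k)" for k
    unfolding q_def by (rule real_seminorm_sup_seminorm_rho[OF rep cont B])
  have "continuous_on UNIV (q k)" for k
    unfolding q_def
    by (rule real_seminorm_continuous[OF tvs seminorm[unfolded q_def]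
          sup_seminorm_rho_tendsto_zero[OF rep cont tvs B]])
  then have closed: "closed {z. q k z \<le> 1}" for k
    by (rule closed_Collect_le[OF _ continuous_on_const])
  have bounded: "bdd_above (range (\<lambda>k. q k x))" for x
    unfolding q_def by (rule Bseq_bdd_above[OF convergent_imp_Bseq[OF convergentI[OF pointwise]]])
  obtain V where "open V" "0 \<in> V" "\<And>k x. x \<in> V \<Longrightarrow> q k x \<le> 1"
    by (rule barrelled_uniform_boundedness[OF tvs barrelled seminorm closed bounded]) (rule that)
  from seminorm this lim show ?thesis
    unfolding q_def by (rule uniformly_bounded_seminorms_tendsto_zero[OF tvs])
qed

lemma seq_cont_action_sup_seminorms:
  assumes adm: "\<And>n B. C n B \<Longrightarrow> B \<noteq> {} \<and> bounded_gpow n B"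
    and cons: "\<And>n B \<xi>. C n B \<Longrightarrow> C (Suc n) (gpow_cons n \<xi> ` B)"
  shows "seq_cont_action (seminorm_topology {sup_seminorm ip rho n B | n B. C n B}) rho"
proof -
  let ?T = "seminorm_topology {sup_seminorm ip rho n B | n B. C n B}"
  have limitin_iff: "limitin ?T x l F \<longleftrightarrow>
      (\<forall>n B. C n B \<longrightarrow> ((\<lambda>k. sup_seminorm ip rho n B (x k - l)) \<longlongrightarrow> 0) F)" for x :: "nat \<Rightarrow> 'v" and l F
    by (rule limitin_sup_seminorms[OF rep cont adm])
  show ?thesis
    unfolding seq_cont_action_def
  proof (intro allI impI)
    fix \<xi> :: "nat \<Rightarrow> 'g" and \<psi> \<xi>0 \<psi>0
    assume "limitin (prod_topology euclidean ?T) (\<lambda>k. (\<xi> k, \<psi> k)) (\<xi>0, \<psi>0) sequentially"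
    then have \<xi>: "\<xi> \<longlonglongrightarrow> \<xi>0"
      and \<psi>: "\<And>n B. C n B \<Longrightarrow> (\<lambda>k. sup_seminorm ip rho n B (\<psi> k - \<psi>0)) \<longlonglongrightarrow> 0"
      unfolding limitin_pairwise limitin_iff by (simp_all add: o_def)
    show "limitin ?T (\<lambda>k. rho (\<xi> k) (\<psi> k)) (rho \<xi>0 \<psi>0) sequentially"
      unfolding limitin_iff
    proof (intro allI impI)
      fix n B assume "C n B"
      then have B: "B \<noteq> {}" "bounded_gpow n B"
        using adm by auto
      let ?p = "sup_seminorm ip rho n B"
      have \<eta>: "(\<lambda>k. \<xi> k - \<xi>0) \<longlonglongrightarrow> 0"
        by (rule tvs_tendsto_diff[OF tvs \<xi>])
      have pointwise: "(\<lambda>k. ?p (rho x (\<psi> k - \<psi>0))) \<longlonglongrightarrow> 0" for x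
        using \<psi>[OF cons[OF \<open>C n B\<close>, of x]] by (simp add: sup_seminorm_gpow_cons)
      have lim: "(\<lambda>k. ?p (rho (\<xi> k - \<xi>0) (\<psi> k - \<psi>0)) + ?p (rho \<xi>0 (\<psi> k - \<psi>0)) + ?p (rho (\<xi> k - \<xi>0) \<psi>0))
          \<longlonglongrightarrow> 0 + 0 + 0"
        by (intro tendsto_add sup_seminorm_rho_tendsto_zero_joint[OF B pointwise \<eta>] pointwise
            filterlim_compose[OF sup_seminorm_rho_tendsto_zero[OF rep cont tvs B] \<eta>])
      have bound: "?p (rho (\<xi> k) (\<psi> k) - rho \<xi>0 \<psi>0) \<le>
          ?p (rho (\<xi> k - \<xi>0) (\<psi> k - \<psi>0)) + ?p (rho \<xi>0 (\<psi> k - \<psi>0)) + ?p (rho (\<xi> k - \<xi>0) \<psi>0)" for k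
        unfolding rho_diff_expand[OF rep]
        by (rule order_trans[OF sup_seminorm_add[OF rep cont B] add_right_mono[OF sup_seminorm_add[OF rep cont B]]])
      show "(\<lambda>k. ?p (rho (\<xi> k) (\<psi> k) - rho \<xi>0 \<psi>0)) \<longlonglongrightarrow> 0"
      proof (rule tendsto_sandwich[OF _ _ tendsto_const])
        show "eventually (\<lambda>k. 0 \<le> ?p (rho (\<xi> k) (\<psi> k) - rho \<xi>0 \<psi>0)) sequentially"
          using sup_seminorm_nonneg[OF rep cont B] by simp
      qed (use bound lim in simp_all)
    qed
  qed
qed

lemma seq_cont_action_weak_top: "seq_cont_action (weak_top ip rho) rho"
  unfolding weak_top_eq_sup_seminorms
proof (rule seq_cont_action_sup_seminorms)
  fix n :: nat and B :: "(nat \<Rightarrow> 'g) set"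
  assume "\<exists>f\<in>PiE {..<n} (\<lambda>_. UNIV). B = {f}"
  then show "B \<noteq> {} \<and> bounded_gpow n B"
    using bounded_gpow_singleton[OF tvs] by auto
next
  fix n :: nat and B :: "(nat \<Rightarrow> 'g) set" and \<xi>
  assume "\<exists>f\<in>PiE {..<n} (\<lambda>_. UNIV). B = {f}"
  then obtain f where f: "B = {f}" by blast
  show "\<exists>f'\<in>PiE {..<Suc n} (\<lambda>_. UNIV). gpow_cons n \<xi> ` B = {f'}"
    unfolding f by (rule bexI[OF _ gpow_cons_PiE]) simp
qed

lemma seq_cont_action_strong_top: "seq_cont_action (strong_top ip rho) rho"
  unfolding strong_top_eq_sup_seminorms
  by (rule seq_cont_action_sup_seminorms) (auto intro: bounded_gpow_gpow_cons[OF tvs])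

end

theorem lemma3p14:
  fixes br :: "'g::{real_vector,topological_space} \<Rightarrow> 'g \<Rightarrow> 'g"
    and sc :: "complex \<Rightarrow> 'v::ab_group_add \<Rightarrow> 'v"
    and ip :: "'v \<Rightarrow> 'v \<Rightarrow> complex"
    and rho :: "'g \<Rightarrow> 'v \<Rightarrow> 'v"
  assumes "lc_lie_algebra br"
    and "barrelled TYPE('g)"
    and "unitary_rep br sc ip rho"
    and "continuous_rep ip rho"
  shows "seq_cont_action (weak_top ip rho) rho \<and> seq_cont_action (strong_top ip rho) rho"
proof -
  have tvs: "locally_convex_tvs TYPE('g)"
    using assms(1) unfolding lc_lie_algebra_def by blast
  show ?thesis
    using seq_cont_action_weak_top[OF assms(3,4) tvs assms(2)]
      seq_cont_action_strong_top[OF assms(3,4) tvs assms(2)] ..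
qed

end
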